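(* For every positive integer $n$, \[ \mathrm{B}_n=\frac{1}{e}\sum_{k=1}^{n}(-1)^{n-k}\,S(n,k)\,k!\;{}_1F_1(k+1;2;1). \]
   Context: $\mathrm{B}_n$ denotes the $n$-th Bell number, defined by the generating function $e^{e^x-1}=\sum_{k=0}^\infty \mathrm{B}_k\frac{x^k}{k!}$ (equivalently, $\mathrm{B}_n$ is the number of partitions of an $n$-element set into nonempty blocks). $S(n,k)$ denotes the Stirling number of the second kind, $S(n,k)=\frac{1}{k!}\sum_{i=0}^{k}(-1)^i\binom{k}{i}(k-i)^n$. ${}_1F_1(a;b;z)=\sum_{m=0}^\infty \frac{(a)_m}{(b)_m}\frac{z^m}{m!}$ is Kummer's confluent hypergeometric function, where $(a)_0=1$ and $(a)_m=a(a+1)\cdots(a+m-1)$ for $m\ge1$. *)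

theory Defs
  imports "HOL-Analysis.Analysis" "HOL-Combinatorics.Stirling" "HOL-Library.Disjoint_Sets"
begin

definition Bell :: "nat \<Rightarrow> nat" where
  "Bell n = card {P. partition_on {..<n} P}"

definition hyp1F1 :: "real \<Rightarrow> real \<Rightarrow> real \<Rightarrow> real" where
  "hyp1F1 a b z = (\<Sum>m. pochhammer a m / pochhammer b m * z ^ m / fact m)"

end

theory Submission
  imports Defs
begin

(*
  Counting partitions of an n-set by their number of blocks gives Bell n = sum_k S(n,k): a new point
  either forms a block of its own or joins one of the existing blocks, which is the recurrence of S.
  Expanding x^n in falling factorials, x^n = sum_k S(n,k) x(x-1)...(x-k+1), and summing j^n/j! over j
  gives Dobinski's formula sum_j j^n/j! = e B_n. The same expansion at -x writes (m+1)^n in terms of the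
  rising factorials (m+1)(m+2)...(m+k) with signs (-1)^(n-k), while k! 1F1(k+1;2;1) is the series
  sum_m (m+1)(m+2)...(m+k)/(m+1)!. Exchanging the finite sum over k with the series over m turns the
  right-hand side into sum_m (m+1)^n/(m+1)! = e B_n.
*)

definition partitions_into :: "'a set \<Rightarrow> nat \<Rightarrow> 'a set set set" where
  "partitions_into A k = {P. partition_on A P \<and> card P = k}"

definition insert_into_block :: "'a \<Rightarrow> 'a set set \<Rightarrow> 'a set \<Rightarrow> 'a set set" where
  "insert_into_block a P B = insert (insert a B) (P - {B})"

lemma finite_partitions_into: "finite A \<Longrightarrow> finite (partitions_into A k)"
  unfolding partitions_into_def
  by (rule rev_finite_subset[OF finitely_many_partition_on]) auto

lemma card_partition_on_le:
  assumes "finite A" "partition_on A P"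
  shows "card P \<le> card A"
proof -
  have blocks: "finite B" "B \<noteq> {}" if "B \<in> P" for B
    using that assms partition_onD1[OF assms(2)] partition_onD3[OF assms(2)]
    by (auto intro: rev_finite_subset)
  have "card P = (\<Sum>B\<in>P. 1)" by simp
  also have "\<dots> \<le> sum card P"
    using blocks by (intro sum_mono) (simp add: Suc_leI card_gt_0_iff)
  also have "\<dots> = card A"
    using card_Union_disjoint[OF partition_onD2[OF assms(2)] blocks(1)] partition_onD1[OF assms(2)]
    by simp
  finally show ?thesis .
qed

lemma partition_on_Diff_block:
  assumes "partition_on A P" "B \<in> P"
  shows "partition_on (A - B) (P - {B})"
proof -
  have "disjnt B (\<Union>(P - {B}))"
    using assms unfolding partition_on_def disjoint_def disjnt_def by blast
  moreover have "P = insert B (P - {B})" using assms(2) by auto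
  ultimately show ?thesis using partition_on_insert[of B "P - {B}" A] assms(1) by auto
qed

lemma partition_on_insert_singleton:
  assumes "partition_on A P" "a \<notin> A"
  shows "partition_on (insert a A) (insert {a} P)"
  using partition_on_insert[of "{a}" P "insert a A"] assms partition_onD1[OF assms(1)]
  by (simp add: disjnt_def insert_Diff_if)

lemma partition_on_insert_into_block:
  assumes "partition_on A P" "a \<notin> A" "B \<in> P"
  shows "partition_on (insert a A) (insert_into_block a P B)"
proof -
  have rest: "partition_on (A - B) (P - {B})" using partition_on_Diff_block assms(1,3) .
  have "disjnt (insert a B) (\<Union>(P - {B}))"
    using partition_onD1[OF rest] assms(2) by (auto simp: disjnt_def)
  moreover have "insert a A - insert a B = A - B" using assms(2) by auto
  moreover have "insert a B \<subseteq> insert a A" using partition_onD1[OF assms(1)] assms(3) by auto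
  ultimately show ?thesis
    unfolding insert_into_block_def using partition_on_insert[of "insert a B" "P - {B}"] rest by simp
qed

lemma card_insert_into_block:
  assumes "partition_on A P" "a \<notin> A" "B \<in> P" "finite P"
  shows "card (insert_into_block a P B) = card P"
proof -
  have "insert a B \<notin> P - {B}" using partition_onD1[OF assms(1)] assms(2) by auto
  then show ?thesis
    unfolding insert_into_block_def using assms(3,4)
    by (metis card_Suc_Diff1 card_insert_disjoint finite_Diff)
qed

lemma remove_point_insert_into_block:
  assumes "partition_on A P" "a \<notin> A" "B \<in> P"
  shows "(\<lambda>X. X - {a}) ` insert_into_block a P B = P"
proof -
  have "X - {a} = X" if "X \<in> P" for X
    using that partition_onD1[OF assms(1)] assms(2) by auto
  then show ?thesis
    unfolding insert_into_block_def using assms(3) by (auto simp: image_iff)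
qed

lemma inj_on_insert_into_block:
  assumes "partition_on A P" "a \<notin> A"
  shows "inj_on (insert_into_block a P) P"
proof (rule inj_onI)
  fix B B' assume B: "B \<in> P" "B' \<in> P" and eq: "insert_into_block a P B = insert_into_block a P B'"
  have a_notin: "a \<notin> X" if "X \<in> P" for X
    using that partition_onD1[OF assms(1)] assms(2) by auto
  have "insert a B \<in> insert_into_block a P B'"
    using eq unfolding insert_into_block_def by blast
  then have "insert a B = insert a B'"
    using a_notin unfolding insert_into_block_def by blast
  then show "B = B'" using a_notin[OF B(1)] a_notin[OF B(2)]
    by (metis insert_ident)
qed

lemma partition_on_insert_cases:
  assumes Q: "partition_on (insert a A) Q" and a: "a \<notin> A"
  obtains P where "partition_on A P" "{a} \<notin> P" "Q = insert {a} P"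
  | P B where "partition_on A P" "B \<in> P" "Q = insert_into_block a P B"
proof -
  obtain B0 where B0: "B0 \<in> Q" "a \<in> B0"
    using partition_onD1[OF Q] by blast
  have rest: "partition_on (insert a A - B0) (Q - {B0})"
    using partition_on_Diff_block Q B0(1) .
  show thesis
  proof (cases "B0 = {a}")
    case True
    have "insert a A - {a} = A" using a by auto
    then show thesis
      using that(1)[of "Q - {{a}}"] rest True B0 a by auto
  next
    case False
    define B where "B = B0 - {a}"
    have B: "B \<noteq> {}" "B \<subseteq> A" "B0 = insert a B" "insert a A - B0 = A - B"
      using False B0 partition_onD1[OF Q] a unfolding B_def by auto
    have "B \<inter> X = {}" if "X \<in> Q - {B0}" for X
      using that B0(1) partition_onD2[OF Q] unfolding B_def disjoint_def by blast
    then have B_notin: "B \<notin> Q - {B0}" and "disjnt B (\<Union>(Q - {B0}))"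
      using B(1) by (auto simp: disjnt_def)
    then have "partition_on A (insert B (Q - {B0}))"
      using partition_on_insert[of B "Q - {B0}" A] rest B(1,2,4) by simp
    moreover have "Q = insert_into_block a (insert B (Q - {B0})) B"
      unfolding insert_into_block_def using B(3) B0(1) B_notin by auto
    ultimately show thesis using that(2) by blast
  qed
qed

lemma partitions_into_insert:
  assumes "finite A" "a \<notin> A"
  shows "partitions_into (insert a A) (Suc k) =
    insert {a} ` partitions_into A k \<union> (\<Union>P\<in>partitions_into A (Suc k). insert_into_block a P ` P)"
    (is "?lhs = ?singleton \<union> ?merged")
proof (intro equalityI subsetI)
  fix Q assume "Q \<in> ?lhs"
  then have Q: "partition_on (insert a A) Q" "card Q = Suc k"
    unfolding partitions_into_def by auto
  from Q(1) assms(2) show "Q \<in> ?singleton \<union> ?merged"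
  proof (cases rule: partition_on_insert_cases)
    case (1 P)
    then have "card Q = Suc (card P)"
      using finite_elements[OF assms(1)] by (simp add: card_insert_disjoint)
    then show ?thesis using 1 Q(2) unfolding partitions_into_def by auto
  next
    case (2 P B)
    then have "card Q = card P"
      using card_insert_into_block finite_elements[OF assms(1)] assms(2) by metis
    then show ?thesis using 2 Q(2) unfolding partitions_into_def by auto
  qed
next
  fix Q assume "Q \<in> ?singleton \<union> ?merged"
  then show "Q \<in> ?lhs"
  proof
    assume "Q \<in> ?singleton"
    then obtain P where P: "partition_on A P" "card P = k" "Q = insert {a} P"
      unfolding partitions_into_def by auto
    have "{a} \<notin> P" using partition_onD1[OF P(1)] assms(2) by auto
    then have "card Q = Suc k" using P finite_elements[OF assms(1) P(1)] by simp
    then show ?thesis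
      using partition_on_insert_singleton[OF P(1) assms(2)] P(3) unfolding partitions_into_def by simp
  next
    assume "Q \<in> ?merged"
    then obtain P B where P: "partition_on A P" "card P = Suc k" "B \<in> P" "Q = insert_into_block a P B"
      unfolding partitions_into_def by auto
    then show ?thesis
      using partition_on_insert_into_block[OF P(1) assms(2) P(3)]
        card_insert_into_block[OF P(1) assms(2) P(3) finite_elements[OF assms(1) P(1)]]
      unfolding partitions_into_def by simp
  qed
qed

lemma card_partitions_into_insert:
  assumes fin: "finite A" and a: "a \<notin> A"
  shows "card (partitions_into (insert a A) (Suc k)) =
    card (partitions_into A k) + Suc k * card (partitions_into A (Suc k))"
proof -
  have a_notin: "a \<notin> X" "{a} \<notin> P" if "P \<in> partitions_into A j" "X \<in> P" for P X j
    using that partition_onD1[of A P] a unfolding partitions_into_def by auto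
  have merged_disjoint: "insert_into_block a P ` P \<inter> insert_into_block a P' ` P' = {}"
    if "P \<in> partitions_into A j" "P' \<in> partitions_into A j" "P \<noteq> P'" for P P' j
  proof -
    have "P = P'" if "B \<in> P" "B' \<in> P'" "insert_into_block a P B = insert_into_block a P' B'" for B B'
      using remove_point_insert_into_block[OF _ a, of P B] remove_point_insert_into_block[OF _ a, of P' B']
        \<open>P \<in> partitions_into A j\<close> \<open>P' \<in> partitions_into A j\<close> that
      unfolding partitions_into_def by simp
    then show ?thesis using \<open>P \<noteq> P'\<close> by blast
  qed
  have card_singleton: "card (insert {a} ` partitions_into A k) = card (partitions_into A k)"
    by (intro card_image inj_onI) (metis a_notin(2) all_not_in_conv insert_ident)
  have "card (\<Union>P\<in>partitions_into A (Suc k). insert_into_block a P ` P)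
      = (\<Sum>P\<in>partitions_into A (Suc k). card (insert_into_block a P ` P))"
    using finite_partitions_into[OF fin] finite_elements[OF fin] merged_disjoint
    by (intro card_UN_disjoint) (auto simp: partitions_into_def)
  also have "\<dots> = (\<Sum>P\<in>partitions_into A (Suc k). Suc k)"
    using card_image[OF inj_on_insert_into_block[OF _ a]] by (simp add: partitions_into_def)
  finally have card_merged: "card (\<Union>P\<in>partitions_into A (Suc k). insert_into_block a P ` P)
      = Suc k * card (partitions_into A (Suc k))" by simp
  have "insert {a} P \<noteq> insert_into_block a P' B"
    if "P' \<in> partitions_into A (Suc k)" "B \<in> P'" for P P' B
  proof -
    have "B \<noteq> {}" using that partition_onD3 unfolding partitions_into_def by blast
    then have "{a} \<notin> insert_into_block a P' B"
      using a_notin[OF that] that unfolding insert_into_block_def by auto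
    then show ?thesis by auto
  qed
  then show ?thesis
    unfolding partitions_into_insert[OF fin a] card_singleton[symmetric] card_merged[symmetric]
    using finite_partitions_into[OF fin] finite_elements[OF fin]
    by (intro card_Un_disjoint) (auto simp: partitions_into_def)
qed

theorem card_partitions_into:
  assumes "finite A"
  shows "card (partitions_into A k) = Stirling (card A) k"
  using assms
proof (induction A arbitrary: k rule: finite_induct)
  case empty
  have "partitions_into ({} :: 'a set) k = (if k = 0 then {{}} else {})"
    by (auto simp: partitions_into_def partition_on_empty)
  then show ?case by (cases k) simp_all
next
  case (insert a A)
  show ?case
  proof (cases k)
    case 0
    have "partitions_into (insert a A) 0 = {}"
      using finite_elements[OF finite.insertI[OF insert(1)]] partition_onD1
      unfolding partitions_into_def by fastforce
    then show ?thesis using 0 insert(1,2) by simp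
  next
    case (Suc j)
    then show ?thesis
      using card_partitions_into_insert[OF insert(1,2)] insert(1,2,3) by simp
  qed
qed

theorem Bell_eq_sum_Stirling: "Bell n = (\<Sum>k\<le>n. Stirling n k)"
proof -
  have "{P. partition_on {..<n} P} = (\<Union>k\<le>n. partitions_into {..<n} k)"
    using card_partition_on_le[of "{..<n}"] unfolding partitions_into_def by auto
  then have "Bell n = card (\<Union>k\<le>n. partitions_into {..<n} k)"
    unfolding Bell_def by simp
  also have "\<dots> = (\<Sum>k\<le>n. card (partitions_into {..<n} k))"
    using finite_partitions_into[of "{..<n}"]
    by (intro card_UN_disjoint) (auto simp: partitions_into_def)
  finally show ?thesis by (simp add: card_partitions_into)
qed

lemma power_eq_sum_Stirling_falling:
  "x ^ n = (\<Sum>k\<le>n. of_nat (Stirling n k) * ((-1) ^ k * pochhammer (-x) k) :: 'a::comm_ring_1)"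
proof (induction n)
  case 0
  then show ?case by simp
next
  case (Suc n)
  define ff where "ff k = (-1) ^ k * pochhammer (-x) k" for k
  have ff_Suc: "x * ff k = ff (Suc k) + of_nat k * ff k" for k
    unfolding ff_def by (simp add: pochhammer_Suc algebra_simps)
  define g where "g k = of_nat k * of_nat (Stirling n k) * ff k" for k
  have g_shift: "(\<Sum>k\<le>n. g k) = (\<Sum>k\<le>n. g (Suc k))"
    using sum.atMost_Suc_shift[of g n] by (simp add: g_def)
  have "x ^ Suc n = (\<Sum>k\<le>n. of_nat (Stirling n k) * (x * ff k))"
    using Suc.IH by (simp add: ff_def sum_distrib_left algebra_simps)
  also have "\<dots> = (\<Sum>k\<le>n. of_nat (Stirling n k) * ff (Suc k)) + (\<Sum>k\<le>n. g k)"
    by (simp add: ff_Suc g_def sum.distrib algebra_simps)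
  also have "\<dots> = (\<Sum>k\<le>n. of_nat (Stirling (Suc n) (Suc k)) * ff (Suc k))"
    unfolding g_shift by (simp add: g_def sum.distrib[symmetric] algebra_simps)
  also have "\<dots> = (\<Sum>k\<le>Suc n. of_nat (Stirling (Suc n) k) * ff k)"
    by (subst sum.atMost_Suc_shift) simp
  finally show ?case unfolding ff_def .
qed

lemma power_eq_sum_Stirling_rising:
  "y ^ n = (\<Sum>k\<le>n. (-1) ^ (n - k) * of_nat (Stirling n k) * pochhammer y k :: 'a::comm_ring_1)"
proof -
  have "y ^ n = (-1) ^ n * (- y) ^ n"
    by (simp flip: power_mult_distrib)
  also have "\<dots> = (\<Sum>k\<le>n. (-1) ^ (n + k) * of_nat (Stirling n k) * pochhammer y k)"
    by (subst power_eq_sum_Stirling_falling)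
      (simp add: sum_distrib_left power_add algebra_simps)
  also have "\<dots> = (\<Sum>k\<le>n. (-1) ^ (n - k) * of_nat (Stirling n k) * pochhammer y k)"
    by (intro sum.cong refl) (simp add: neg_one_power_add_eq_neg_one_power_diff)
  finally show ?thesis .
qed

lemma falling_factorial_of_nat:
  "(-1) ^ k * pochhammer (- of_nat j) k =
     (if k \<le> j then fact j / fact (j - k) else (0 :: 'a::field_char_0))"
proof -
  have "(-1) ^ k * pochhammer (- of_nat j) k = fact k * (of_nat (j choose k) :: 'a)"
    by (simp add: binomial_gbinomial gbinomial_pochhammer)
  then show ?thesis
    by (simp add: binomial_fact)
qed

lemma sums_exp_1_shifted:
  "(\<lambda>j. if k \<le> j then 1 / fact (j - k) else 0) sums exp (1 :: real)"
proof -
  have "(\<lambda>i. if k \<le> i + k then 1 / fact (i + k - k) else 0) sums exp (1 :: real)"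
    using exp_converges[of "1 :: real"] by (simp add: divide_inverse)
  then show ?thesis
    by (subst (asm) sums_iff_shift) simp
qed

theorem Dobinski:
  "(\<lambda>j. real j ^ n / fact j) sums (exp 1 * real (Bell n))"
proof -
  have term_eq: "real j ^ n / fact j =
      (\<Sum>k\<le>n. real (Stirling n k) * (if k \<le> j then 1 / fact (j - k) else 0))" for j
    by (subst power_eq_sum_Stirling_falling)
      (auto simp: falling_factorial_of_nat sum_divide_distrib intro!: sum.cong)
  have "(\<lambda>j. \<Sum>k\<le>n. real (Stirling n k) * (if k \<le> j then 1 / fact (j - k) else 0))
      sums (\<Sum>k\<le>n. real (Stirling n k) * exp 1)"
    by (intro sums_sum sums_mult sums_exp_1_shifted)
  then show ?thesis
    by (simp add: term_eq Bell_eq_sum_Stirling sum_distrib_left mult_ac)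
qed

lemma summable_pochhammer_div_fact:
  "summable (\<lambda>j. pochhammer (real j) k / fact j)"
proof -
  have "summable (\<lambda>j. \<Sum>i\<le>k. real (stirling k i) * (real j ^ i / fact j))"
    using Dobinski by (intro summable_sum summable_mult) (rule sums_summable)
  then show ?thesis
    by (simp add: stirling_pochhammer[symmetric] sum_divide_distrib)
qed

lemma pochhammer_ratio_swap:
  "pochhammer (of_nat k + 1) m / pochhammer 2 m / fact m =
     (pochhammer (of_nat m + 1) k / fact (Suc m) / fact k :: 'a::field_char_0)"
proof -
  have "fact k * pochhammer (of_nat k + 1) m = (fact (k + m) :: 'a)"
    "fact m * pochhammer (of_nat m + 1) k = (fact (m + k) :: 'a)"
    using pochhammer_product'[of "1::'a" k m] pochhammer_product'[of "1::'a" m k]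
    by (simp_all add: pochhammer_fact add.commute)
  then have swap: "fact k * pochhammer (of_nat k + 1) m = fact m * (pochhammer (of_nat m + 1) k :: 'a)"
    by (simp add: add.commute)
  have "pochhammer (2::'a) m = fact (Suc m)"
    using pochhammer_rec[of "1::'a" m] by (simp add: pochhammer_fact)
  then have "pochhammer (of_nat k + 1) m / pochhammer 2 m / fact m
      = fact k * pochhammer (of_nat k + 1) m / (fact m * fact (Suc m) * (fact k :: 'a))"
    by (simp del: fact_Suc)
  also have "\<dots> = fact m * pochhammer (of_nat m + 1) k / (fact m * fact (Suc m) * fact k)"
    by (simp only: swap)
  also have "\<dots> = pochhammer (of_nat m + 1) k / fact (Suc m) / fact k"
    by (simp del: fact_Suc)
  finally show ?thesis .
qed

lemma sums_fact_hyp1F1: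
  "(\<lambda>m. pochhammer (real m + 1) k / fact (Suc m)) sums (fact k * hyp1F1 (real k + 1) 2 1)"
proof -
  define u where "u = (\<lambda>m. pochhammer (real m + 1) k / fact (Suc m))"
  have u_eq: "u = (\<lambda>m. pochhammer (real (Suc m)) k / fact (Suc m))"
    by (simp add: u_def fun_eq_iff add.commute)
  have "summable u"
    unfolding u_eq using summable_pochhammer_div_fact[of k]
    by (rule summable_Suc_iff[where f = "\<lambda>j. pochhammer (real j) k / fact j", THEN iffD2])
  have "(\<lambda>m. pochhammer (real k + 1) m / pochhammer 2 m * 1 ^ m / fact m) = (\<lambda>m. u m / fact k)"
    by (simp only: power_one mult_1_right pochhammer_ratio_swap u_def)
  moreover have "(\<lambda>m. u m / fact k) sums (suminf u / fact k)"
    using \<open>summable u\<close> by (intro sums_divide summable_sums)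
  ultimately have "hyp1F1 (real k + 1) 2 1 = suminf u / fact k"
    unfolding hyp1F1_def by (simp add: sums_iff)
  then have "u sums (fact k * hyp1F1 (real k + 1) 2 1)"
    using summable_sums[OF \<open>summable u\<close>] by simp
  then show ?thesis
    unfolding u_def .
qed

theorem theorem1p1:
  fixes n :: nat
  assumes "n \<ge> 1"
  shows "real (Bell n) = (1 / exp 1) *
    (\<Sum>k=1..n. (-1) ^ (n - k) * real (Stirling n k) * fact k * hyp1F1 (real k + 1) 2 1)"
proof -
  define c where "c k = (-1) ^ (n - k) * real (Stirling n k)" for k
  have Stirling_0: "Stirling n 0 = 0"
    using assms by (cases n) auto
  have "(\<lambda>m. \<Sum>k\<le>n. c k * (pochhammer (real m + 1) k / fact (Suc m)))
      sums (\<Sum>k\<le>n. c k * (fact k * hyp1F1 (real k + 1) 2 1))"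
    by (intro sums_sum sums_mult sums_fact_hyp1F1)
  moreover have "(\<Sum>k\<le>n. c k * (pochhammer (real m + 1) k / fact (Suc m)))
      = real (Suc m) ^ n / fact (Suc m)" for m
    using power_eq_sum_Stirling_rising[of "real m + 1" n]
    by (simp add: c_def sum_divide_distrib add.commute)
  moreover have "(\<lambda>m. real (Suc m) ^ n / fact (Suc m)) sums (exp 1 * real (Bell n))"
    using Dobinski[of n] assms by (subst sums_Suc_iff) (simp add: power_0_left)
  ultimately have "(\<Sum>k\<le>n. c k * (fact k * hyp1F1 (real k + 1) 2 1)) = exp 1 * real (Bell n)"
    by (simp add: sums_unique2)
  also have "{..n} = insert 0 {1..n}"
    by auto
  finally show ?thesis
    by (simp add: c_def Stirling_0 mult.assoc)
qed

end
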